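(* Let $A$ be a valuation ring with $2\in A^\times$, and let $[u_1,\dots,u_r]$ and $[v_1,\dots,v_s]$ be possibly empty frames in $\mathbb E^n_A$ spanning quadratic submodules $U$ and $V$ respectively. Then $U^\perp\cap V^\perp$ contains a non-singular subspace of dimension at least $n-r-2s$.
   Context: $\mathbb E^n_A=(A^n,q)$, $q(x)=x_1^2+\dots+x_n^2$, $B_q(x,y)=q(x+y)-q(x)-q(y)$. A unit vector is $v$ with $q(v)=1$; a frame is a finite set of unit vectors $w_i$ with $B_q(w_i,w_j)=0$ for $i\neq j$; $S^\perp=\{x:B_q(x,s)=0\ \forall s\in S\}$. A quadratic submodule is a direct summand with restricted form. A non-singular subspace of dimension $d$ means a free $A$-submodule $W$ of rank $d$ such that $x\mapsto B_q(x,-)|_W$ is an isomorphism $W\to\mathrm{Hom}_A(W,A)$. A valuation ring is a domain $A$ with fraction field $K$ such that $x\in A$ or $x^{-1}\in A$ for each $x\in K^\times$. *)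

theory Defs
  imports "HOL-Analysis.Analysis" "HOL-Computational_Algebra.Fraction_Field"
begin

definition valuation_ring :: "'a::idom itself \<Rightarrow> bool" where
  "valuation_ring _ \<longleftrightarrow>
     (\<forall>x::'a fract. x \<noteq> 0 \<longrightarrow>
        x \<in> range (\<lambda>a. Fract a 1) \<or> inverse x \<in> range (\<lambda>a. Fract a 1))"

definition qf :: "'a::comm_ring_1 ^ 'n::finite \<Rightarrow> 'a" where
  "qf x = (\<Sum>i\<in>UNIV. (x $ i)^2)"

definition Bq :: "'a::comm_ring_1 ^ 'n::finite \<Rightarrow> 'a ^ 'n \<Rightarrow> 'a" where
  "Bq x y = qf (x + y) - qf x - qf y"

definition unit_vector :: "'a::comm_ring_1 ^ 'n::finite \<Rightarrow> bool" where
  "unit_vector v \<longleftrightarrow> qf v = 1"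

definition is_frame :: "(nat \<Rightarrow> 'a::comm_ring_1 ^ 'n::finite) \<Rightarrow> nat \<Rightarrow> bool" where
  "is_frame u r \<longleftrightarrow> (\<forall>i<r. unit_vector (u i)) \<and>
     (\<forall>i<r. \<forall>j<r. i \<noteq> j \<longrightarrow> Bq (u i) (u j) = 0)"

definition lin_span :: "(nat \<Rightarrow> 'a::comm_ring_1 ^ 'n::finite) \<Rightarrow> nat \<Rightarrow> ('a ^ 'n) set" where
  "lin_span u r = {(\<Sum>i<r. c i *s u i) | c. True}"

definition perp :: "('a::comm_ring_1 ^ 'n::finite) set \<Rightarrow> ('a ^ 'n) set" where
  "perp S = {x. \<forall>s\<in>S. Bq x s = 0}"

definition is_submodule :: "('a::comm_ring_1 ^ 'n::finite) set \<Rightarrow> bool" where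
  "is_submodule W \<longleftrightarrow> 0 \<in> W \<and> (\<forall>x\<in>W. \<forall>y\<in>W. x + y \<in> W) \<and> (\<forall>c. \<forall>x\<in>W. c *s x \<in> W)"

definition free_of_rank :: "('a::comm_ring_1 ^ 'n::finite) set \<Rightarrow> nat \<Rightarrow> bool" where
  "free_of_rank W d \<longleftrightarrow> (\<exists>b. (\<forall>i<d. b i \<in> W) \<and> W = lin_span b d \<and>
      (\<forall>c. (\<Sum>i<d. c i *s b i) = 0 \<longrightarrow> (\<forall>i<d. c i = 0)))"

definition linear_form_on :: "('a::comm_ring_1 ^ 'n::finite) set \<Rightarrow> ('a ^ 'n \<Rightarrow> 'a) \<Rightarrow> bool" where
  "linear_form_on W f \<longleftrightarrow> (\<forall>x\<in>W. \<forall>y\<in>W. f (x + y) = f x + f y) \<and>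
     (\<forall>c. \<forall>x\<in>W. f (c *s x) = c * f x)"

text \<open>Non-singular subspace of dimension d: a free submodule W of rank d such that
  x |-> B_q(x,-)|_W is an isomorphism W -> Hom_A(W,A) (it is always A-linear, so
  isomorphism = bijective).\<close>
definition nonsingular_subspace :: "('a::comm_ring_1 ^ 'n::finite) set \<Rightarrow> nat \<Rightarrow> bool" where
  "nonsingular_subspace W d \<longleftrightarrow> is_submodule W \<and> free_of_rank W d \<and>
     inj_on (\<lambda>x. restrict (Bq x) W) W \<and>
     (\<forall>f. linear_form_on W f \<longrightarrow> (\<exists>x\<in>W. \<forall>y\<in>W. Bq x y = f y))"

end

theory Submission
  imports Defs
begin

text \<open>Call a finite family (b_i) non-singular if z |-> (B(z, b_i))_i maps its span bijectively
  onto A^I; its span is then a non-singular subspace of dimension |I|, and the standard basis is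
  such a family because 2 is a unit. The non-units of a valuation ring form an ideal, so a vector
  x of the span with B(x, x) a unit has a unit coefficient a_j; exchanging b_j for x and projecting
  the other b_i orthogonally to x yields a non-singular family of size |I| - 1 spanning the part
  of the span orthogonal to x. This kills the frame vectors u_i one at a time.

  For an arbitrary vector w, a coefficient B(b_k, w) of minimal valuation shows that B(-, w) is
  a multiple of B(-, y) on the span, where B(y, p) = 1 for some p in the span. If B(y, y) is a
  unit we kill y. Otherwise one of p, p + y is a vector z such that B(z, z) and
  B(z, z) B(y, y) - B(z, y)^2 are units, and we kill z and then the projection of y orthogonal
  to z: two dimensions per vector v_i.\<close>

section \<open>The polar form\<close>

lemma Bq_eq_sum: "Bq x y = 2 * (\<Sum>i\<in>UNIV. x$i * y$i)"
  unfolding Bq_def qf_def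
  by (simp add: power2_eq_square algebra_simps sum.distrib sum_distrib_left flip: sum_subtractf)

lemma Bq_commute: "Bq x y = Bq y x"
  unfolding Bq_eq_sum by (simp add: mult.commute)

lemma Bq_self: "Bq x x = 2 * qf x"
  by (simp add: Bq_eq_sum qf_def power2_eq_square)

lemma Bq_add_left: "Bq (x + y) z = Bq x z + Bq y z"
  and Bq_add_right: "Bq z (x + y) = Bq z x + Bq z y"
  and Bq_diff_left: "Bq (x - y) z = Bq x z - Bq y z"
  and Bq_diff_right: "Bq z (x - y) = Bq z x - Bq z y"
  and Bq_smult_left: "Bq (c *s x) z = c * Bq x z"
  and Bq_smult_right: "Bq z (c *s x) = c * Bq z x"
  unfolding Bq_eq_sum
  by (simp_all add: algebra_simps sum.distrib sum_subtractf sum_distrib_left)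

lemma Bq_zero_left [simp]: "Bq 0 z = 0"
  and Bq_zero_right [simp]: "Bq z 0 = 0"
  unfolding Bq_eq_sum by simp_all

lemma Bq_sum_left: "Bq (\<Sum>i\<in>I. c i *s b i) z = (\<Sum>i\<in>I. c i * Bq (b i) z)"
  by (induction I rule: infinite_finite_induct) (simp_all add: Bq_add_left Bq_smult_left)

lemma Bq_sum_right: "Bq z (\<Sum>i\<in>I. c i *s b i) = (\<Sum>i\<in>I. c i * Bq z (b i))"
  by (induction I rule: infinite_finite_induct) (simp_all add: Bq_add_right Bq_smult_right)

lemma Bq_axis_right: "Bq x (axis j 1) = 2 * x $ j"
proof -
  have "(\<Sum>m\<in>UNIV. x$m * axis j 1 $ m) = (\<Sum>m\<in>UNIV. if m = j then x$m else 0)"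
    by (rule sum.cong) (auto simp: axis_def)
  then show ?thesis by (simp add: Bq_eq_sum)
qed

section \<open>Spans of families\<close>

definition mod_span :: "(nat \<Rightarrow> 'a::comm_ring_1 ^ 'n::finite) \<Rightarrow> nat set \<Rightarrow> ('a ^ 'n) set" where
  "mod_span b I = {(\<Sum>i\<in>I. c i *s b i) | c. True}"

lemma lin_span_eq_mod_span: "lin_span u r = mod_span u {..<r}"
  unfolding lin_span_def mod_span_def by simp

lemma mod_span_iff: "x \<in> mod_span b I \<longleftrightarrow> (\<exists>c. x = (\<Sum>i\<in>I. c i *s b i))"
  unfolding mod_span_def by simp

lemma mod_span_sumI [intro]: "(\<Sum>i\<in>I. c i *s b i) \<in> mod_span b I"
  unfolding mod_span_iff by blast

lemma mod_span_empty [simp]: "mod_span b {} = {0}"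
  unfolding mod_span_def by simp

lemma is_submodule_sum:
  assumes "is_submodule S" "\<forall>i\<in>I. b i \<in> S"
  shows "(\<Sum>i\<in>I. c i *s b i) \<in> S"
  using assms(2)
  by (induction I rule: infinite_finite_induct) (use assms(1) in \<open>simp_all add: is_submodule_def\<close>)

lemma is_submodule_diff:
  assumes "is_submodule S" "x \<in> S" "y \<in> S"
  shows "x - y \<in> S"
proof -
  have "x + (-1) *s y \<in> S" using assms unfolding is_submodule_def by blast
  moreover have "x + (-1) *s y = x - y" by (simp add: vec_eq_iff)
  ultimately show ?thesis by simp
qed

lemma is_submodule_Int: "is_submodule S \<Longrightarrow> is_submodule T \<Longrightarrow> is_submodule (S \<inter> T)"
  unfolding is_submodule_def by auto

lemma is_submodule_orth: "is_submodule {z. Bq z x = 0}"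
  unfolding is_submodule_def by (simp add: Bq_add_left Bq_smult_left)

lemma mod_span_minimal: "is_submodule S \<Longrightarrow> \<forall>i\<in>I. b i \<in> S \<Longrightarrow> mod_span b I \<subseteq> S"
  unfolding mod_span_def using is_submodule_sum by blast

lemma is_submodule_mod_span: "is_submodule (mod_span b I)"
  unfolding is_submodule_def
proof (intro conjI ballI allI)
  show "0 \<in> mod_span b I"
    unfolding mod_span_def by (intro CollectI exI[of _ "\<lambda>_. 0"]) simp
next
  fix x y assume "x \<in> mod_span b I" "y \<in> mod_span b I"
  then obtain c d where "x = (\<Sum>i\<in>I. c i *s b i)" "y = (\<Sum>i\<in>I. d i *s b i)"
    unfolding mod_span_iff by auto
  then have "x + y = (\<Sum>i\<in>I. (c i + d i) *s b i)"
    by (simp add: sum.distrib vector_sadd_rdistrib)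
  then show "x + y \<in> mod_span b I" by (simp only: mod_span_sumI)
next
  fix a x assume "x \<in> mod_span b I"
  then obtain c where "x = (\<Sum>i\<in>I. c i *s b i)" unfolding mod_span_iff by auto
  then have "a *s x = (\<Sum>i\<in>I. (a * c i) *s b i)"
    by (simp add: vec_eq_iff sum_distrib_left mult.assoc)
  then show "a *s x \<in> mod_span b I" by (simp only: mod_span_sumI)
qed

lemma mod_span_base: "finite I \<Longrightarrow> i \<in> I \<Longrightarrow> b i \<in> mod_span b I"
  unfolding mod_span_def
proof (intro CollectI exI[of _ "\<lambda>j. if j = i then 1 else 0"] conjI TrueI)
  assume "finite I" "i \<in> I"
  have "(\<Sum>j\<in>I. (if j = i then 1 else 0) *s b j) = (\<Sum>j\<in>I. if j = i then b j else 0)"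
    by (rule sum.cong) auto
  with \<open>finite I\<close> \<open>i \<in> I\<close> show "b i = (\<Sum>j\<in>I. (if j = i then 1 else 0) *s b j)" by simp
qed

lemma Bq_mod_span_cong:
  assumes "z \<in> mod_span b I" "\<forall>i\<in>I. Bq (b i) w = Bq (b i) w'"
  shows "Bq z w = Bq z w'"
proof -
  obtain c where "z = (\<Sum>i\<in>I. c i *s b i)" using assms(1) unfolding mod_span_iff by auto
  then show ?thesis using assms(2) by (simp add: Bq_sum_left)
qed

lemma mod_span_reindex:
  assumes h: "bij_betw h J I"
  shows "mod_span (b \<circ> h) J = mod_span b I"
proof (intro set_eqI iffI)
  fix x assume "x \<in> mod_span (b \<circ> h) J"
  then obtain c where x: "x = (\<Sum>k\<in>J. c k *s b (h k))" unfolding mod_span_iff by auto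
  have "x = (\<Sum>k\<in>J. c (inv_into J h (h k)) *s b (h k))"
    unfolding x by (rule sum.cong) (use h in \<open>auto simp: bij_betw_def\<close>)
  also have "\<dots> = (\<Sum>i\<in>I. c (inv_into J h i) *s b i)"
    using sum.reindex_bij_betw[OF h, of "\<lambda>i. c (inv_into J h i) *s b i"] by simp
  finally show "x \<in> mod_span b I" by (simp only: mod_span_sumI)
next
  fix x assume "x \<in> mod_span b I"
  then obtain c where "x = (\<Sum>i\<in>I. c i *s b i)" unfolding mod_span_iff by auto
  then have "x = (\<Sum>k\<in>J. c (h k) *s (b \<circ> h) k)"
    using sum.reindex_bij_betw[OF h, of "\<lambda>i. c i *s b i"] by simp
  then show "x \<in> mod_span (b \<circ> h) J" by (simp only: mod_span_sumI)
qed

section \<open>Valuation rings\<close>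

lemma valuation_ring_dvd_total:
  assumes "valuation_ring TYPE('a::idom)"
  shows "(a::'a) dvd b \<or> b dvd a"
proof (cases "a = 0 \<or> b = 0")
  case False
  then have "Fract a b \<noteq> 0" by (simp add: Zero_fract_def eq_fract)
  with assms have "Fract a b \<in> range (\<lambda>c. Fract c 1) \<or> inverse (Fract a b) \<in> range (\<lambda>c. Fract c 1)"
    unfolding valuation_ring_def by blast
  then obtain c where "Fract a b = Fract c 1 \<or> Fract b a = Fract c 1" by auto
  with False have "a = c * b \<or> b = c * a" by (simp add: eq_fract)
  then show ?thesis by (metis dvd_triv_right)
qed auto

lemma valuation_ring_nonunit_add:
  assumes "valuation_ring TYPE('a::idom)" "\<not> (x::'a) dvd 1" "\<not> y dvd 1"
  shows "\<not> (x + y) dvd 1"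
proof
  assume unit: "(x + y) dvd 1"
  from valuation_ring_dvd_total[OF assms(1)] consider "x dvd y" | "y dvd x" by blast
  then show False
  proof cases
    case 1
    then obtain t where "y = x * t" by (elim dvdE)
    then have "x + y = x * (1 + t)" by (simp add: algebra_simps)
    then show False using unit assms(2) by (metis dvd_mult_left)
  next
    case 2
    then obtain t where "x = y * t" by (elim dvdE)
    then have "x + y = y * (1 + t)" by (simp add: algebra_simps)
    then show False using unit assms(3) by (metis dvd_mult_left)
  qed
qed

lemma valuation_ring_unit_add_nonunit:
  assumes "valuation_ring TYPE('a::idom)" "(x::'a) dvd 1" "\<not> y dvd 1"
  shows "(x + y) dvd 1"
  using valuation_ring_nonunit_add[OF assms(1), of "x + y" "- y"] assms(2,3) by auto

lemma valuation_ring_sum_unit: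
  assumes "valuation_ring TYPE('a::idom)" "(\<Sum>i\<in>I. f i :: 'a) dvd 1"
  shows "\<exists>i\<in>I. f i dvd 1"
  using assms(2)
proof (induction I rule: infinite_finite_induct)
  case (insert i F)
  show ?case
  proof (rule ccontr)
    assume "\<not> ?case"
    with insert.IH have "\<not> f i dvd 1" "\<not> sum f F dvd 1" by auto
    with valuation_ring_nonunit_add[OF assms(1)] insert show False by auto
  qed
qed simp_all

lemma valuation_ring_ex_min_dvd:
  assumes "valuation_ring TYPE('a::idom)" "finite I" "I \<noteq> {}"
  shows "\<exists>k\<in>I. \<forall>i\<in>I. (f k :: 'a) dvd f i"
  using assms(2,3)
proof (induction I rule: finite_ne_induct)
  case (insert x F)
  then obtain k where k: "k \<in> F" "\<forall>i\<in>F. f k dvd f i" by auto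
  with valuation_ring_dvd_total[OF assms(1), of "f k" "f x"] show ?case
    by (auto intro: dvd_trans)
qed simp

section \<open>Orthogonal projection\<close>

text \<open>B(x, x) times the projection of y orthogonal to x, so that no division is needed.\<close>

definition orth_proj :: "'a::comm_ring_1 ^ 'n::finite \<Rightarrow> 'a ^ 'n \<Rightarrow> 'a ^ 'n" where
  "orth_proj x y = Bq x x *s y - Bq y x *s x"

lemma Bq_orth_proj_left: "Bq (orth_proj x y) x = 0"
  unfolding orth_proj_def by (simp add: Bq_diff_left Bq_smult_left mult.commute)

lemma Bq_orth_proj_right: "Bq z x = 0 \<Longrightarrow> Bq z (orth_proj x y) = Bq x x * Bq z y"
  unfolding orth_proj_def by (simp add: Bq_diff_right Bq_smult_right)

lemma orth_proj_orth: "Bq z x = 0 \<Longrightarrow> orth_proj x z = Bq x x *s z"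
  unfolding orth_proj_def by simp

lemma orth_proj_zero [simp]: "orth_proj x 0 = 0"
  unfolding orth_proj_def by simp

lemma orth_proj_self [simp]: "orth_proj x x = 0"
  unfolding orth_proj_def by simp

lemma orth_proj_add: "orth_proj x (y + z) = orth_proj x y + orth_proj x z"
  unfolding orth_proj_def by (simp add: Bq_add_left vec_eq_iff algebra_simps)

lemma orth_proj_smult: "orth_proj x (c *s y) = c *s orth_proj x y"
  unfolding orth_proj_def by (simp add: Bq_smult_left vec_eq_iff algebra_simps)

lemma orth_proj_sum: "orth_proj x (\<Sum>i\<in>I. c i *s b i) = (\<Sum>i\<in>I. c i *s orth_proj x (b i))"
  by (induction I rule: infinite_finite_induct)
    (simp_all add: orth_proj_add orth_proj_smult)

lemma Bq_orth_proj_self: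
  "Bq (orth_proj x y) (orth_proj x y) = Bq x x * (Bq x x * Bq y y - (Bq x y)\<^sup>2)"
  unfolding orth_proj_def
  by (simp add: Bq_diff_left Bq_diff_right Bq_smult_left Bq_smult_right Bq_commute[of x y]
      power2_eq_square algebra_simps)

lemma orth_proj_mem: "is_submodule S \<Longrightarrow> x \<in> S \<Longrightarrow> y \<in> S \<Longrightarrow> orth_proj x y \<in> S"
  unfolding orth_proj_def by (metis is_submodule_def is_submodule_diff)

section \<open>Non-singular families\<close>

text \<open>Families are indexed by arbitrary finite sets of naturals, so that dropping an index
  needs no renumbering.\<close>

definition nonsingular_family :: "(nat \<Rightarrow> 'a::comm_ring_1 ^ 'n::finite) \<Rightarrow> nat set \<Rightarrow> bool" where
  "nonsingular_family b I \<longleftrightarrow> finite I \<and>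
     (\<forall>\<phi>. \<exists>y\<in>mod_span b I. \<forall>i\<in>I. Bq y (b i) = \<phi> i) \<and>
     (\<forall>z\<in>mod_span b I. (\<forall>i\<in>I. Bq z (b i) = 0) \<longrightarrow> z = 0)"

lemma nonsingular_familyD:
  assumes "nonsingular_family b I"
  shows nonsingular_family_finite: "finite I"
    and nonsingular_family_surj: "\<exists>y\<in>mod_span b I. \<forall>i\<in>I. Bq y (b i) = \<phi> i"
    and nonsingular_family_inj: "z \<in> mod_span b I \<Longrightarrow> \<forall>i\<in>I. Bq z (b i) = 0 \<Longrightarrow> z = 0"
  using assms unfolding nonsingular_family_def by blast+

lemma sum_split_unit_coeff:
  fixes b :: "nat \<Rightarrow> 'a::comm_ring_1 ^ 'n::finite"
  assumes "finite I" "j \<in> I" "x = (\<Sum>i\<in>I. a i *s b i)"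
  shows "x = a j *s b j + (\<Sum>i\<in>I - {j}. a i *s b i)"
  using assms by (simp add: sum.remove)

lemma mod_span_exchange:
  fixes b :: "nat \<Rightarrow> 'a::comm_ring_1 ^ 'n::finite"
  assumes fin: "finite I" and j: "j \<in> I"
    and x: "x = (\<Sum>i\<in>I. a i *s b i)" and aj: "a j dvd 1"
  shows "mod_span (b(j := x)) I = mod_span b I"
proof
  have "x \<in> mod_span b I" unfolding x by (rule mod_span_sumI)
  then show "mod_span (b(j := x)) I \<subseteq> mod_span b I"
    by (intro mod_span_minimal is_submodule_mod_span) (auto intro: mod_span_base[OF fin])
next
  let ?b' = "b(j := x)" and ?J = "I - {j}"
  obtain a' where a': "1 = a j * a'" using aj by (rule dvdE)
  have b'_span: "?b' i \<in> mod_span ?b' I" if "i \<in> I" for i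
    using mod_span_base[OF fin that] .
  have "(\<Sum>i\<in>?J. a i *s ?b' i) \<in> mod_span ?b' I"
    by (rule is_submodule_sum[OF is_submodule_mod_span]) (use b'_span in blast)
  moreover have "(\<Sum>i\<in>?J. a i *s ?b' i) = (\<Sum>i\<in>?J. a i *s b i)" by (rule sum.cong) auto
  ultimately have "x - (\<Sum>i\<in>?J. a i *s b i) \<in> mod_span ?b' I"
    using b'_span[OF j] by (simp add: is_submodule_diff[OF is_submodule_mod_span])
  moreover have "x - (\<Sum>i\<in>?J. a i *s b i) = a j *s b j"
    using sum_split_unit_coeff[OF fin j x] by simp
  ultimately have "a' *s (a j *s b j) \<in> mod_span ?b' I"
    using is_submodule_mod_span unfolding is_submodule_def by metis
  moreover have "a' *s (a j *s b j) = b j" using a' by (simp add: mult.commute)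
  ultimately have "b j \<in> mod_span ?b' I" by simp
  then have "b i \<in> mod_span ?b' I" if "i \<in> I" for i
    using b'_span[OF that] by (cases "i = j") auto
  then show "mod_span b I \<subseteq> mod_span ?b' I"
    by (intro mod_span_minimal is_submodule_mod_span) auto
qed

lemma nonsingular_family_exchange:
  fixes b :: "nat \<Rightarrow> 'a::idom ^ 'n::finite"
  assumes ns: "nonsingular_family b I" and j: "j \<in> I"
    and x: "x = (\<Sum>i\<in>I. a i *s b i)" and aj: "a j dvd 1"
  shows "nonsingular_family (b(j := x)) I"
  unfolding nonsingular_family_def mod_span_exchange[OF nonsingular_family_finite[OF ns] j x aj]
proof (intro conjI allI ballI impI)
  let ?b' = "b(j := x)" and ?J = "I - {j}"
  have Bq_x: "Bq z x = a j * Bq z (b j) + (\<Sum>i\<in>?J. a i * Bq z (b i))" for z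
    by (subst sum_split_unit_coeff[OF nonsingular_family_finite[OF ns] j x])
      (simp add: Bq_add_right Bq_smult_right Bq_sum_right)
  obtain a' where a': "1 = a j * a'" using aj by (rule dvdE)
  {
    fix \<phi> :: "nat \<Rightarrow> 'a"
    let ?S = "\<Sum>i\<in>?J. a i * \<phi> i"
    obtain y where y: "y \<in> mod_span b I" "\<forall>i\<in>I. Bq y (b i) = (\<phi>(j := a' * (\<phi> j - ?S))) i"
      using nonsingular_family_surj[OF ns, of "\<phi>(j := a' * (\<phi> j - ?S))"] by blast
    have "(\<Sum>i\<in>?J. a i * Bq y (b i)) = ?S" by (rule sum.cong) (use y in auto)
    then have "Bq y x = a j * (a' * (\<phi> j - ?S)) + ?S" using y j by (simp add: Bq_x)
    also have "\<dots> = (a j * a') * (\<phi> j - ?S) + ?S" by (simp only: mult.assoc)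
    finally have "Bq y x = \<phi> j" using a' by simp
    with y show "\<exists>y\<in>mod_span b I. \<forall>i\<in>I. Bq y (?b' i) = \<phi> i" by auto
  next
    fix z assume z: "z \<in> mod_span b I" and orth: "\<forall>i\<in>I. Bq z (?b' i) = 0"
    then have orth_J: "\<forall>i\<in>?J. Bq z (b i) = 0" by (metis DiffE fun_upd_other singletonI)
    have "Bq z x = 0" using orth j by (metis fun_upd_same)
    then have "a j * Bq z (b j) = 0" by (simp add: Bq_x orth_J)
    then have "Bq z (b j) = 0" using aj by auto
    with orth_J show "z = 0" using nonsingular_family_inj[OF ns z] by blast
  }
qed (rule nonsingular_family_finite[OF ns])

lemma mod_span_orth_proj:
  fixes b :: "nat \<Rightarrow> 'a::comm_ring_1 ^ 'n::finite"
  assumes fin: "finite I" and j: "j \<in> I" and unit: "Bq (b j) (b j) dvd 1"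
  shows "mod_span (\<lambda>i. orth_proj (b j) (b i)) (I - {j}) = mod_span b I \<inter> {z. Bq z (b j) = 0}"
    (is "mod_span ?g ?J = ?P")
proof
  have P: "is_submodule ?P" by (intro is_submodule_Int is_submodule_mod_span is_submodule_orth)
  have "?g i \<in> ?P" if "i \<in> I" for i
    using orth_proj_mem[OF is_submodule_mod_span mod_span_base[OF fin j] mod_span_base[OF fin that]]
    by (simp add: Bq_orth_proj_left)
  then show "mod_span ?g ?J \<subseteq> ?P" by (intro mod_span_minimal[OF P]) auto
next
  obtain u' where u': "1 = Bq (b j) (b j) * u'" using unit by (rule dvdE)
  show "?P \<subseteq> mod_span ?g ?J"
  proof
    fix z assume z: "z \<in> ?P"
    then obtain c where c: "z = (\<Sum>i\<in>I. c i *s b i)" by (auto simp: mod_span_iff)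
    have "Bq (b j) (b j) *s z = orth_proj (b j) z" using z by (simp add: orth_proj_orth)
    also have "\<dots> = (\<Sum>i\<in>I. c i *s ?g i)" unfolding c by (rule orth_proj_sum)
    also have "\<dots> = (\<Sum>i\<in>?J. c i *s ?g i)" using fin j by (simp add: sum.remove)
    finally have "Bq (b j) (b j) *s z \<in> mod_span ?g ?J" by (simp only: mod_span_sumI)
    then have "u' *s (Bq (b j) (b j) *s z) \<in> mod_span ?g ?J"
      using is_submodule_mod_span unfolding is_submodule_def by blast
    then show "z \<in> mod_span ?g ?J" using u' by (simp add: mult.commute)
  qed
qed

lemma nonsingular_family_orth_member:
  fixes b :: "nat \<Rightarrow> 'a::idom ^ 'n::finite"
  assumes ns: "nonsingular_family b I" and j: "j \<in> I" and unit: "Bq (b j) (b j) dvd 1"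
  shows "nonsingular_family (\<lambda>i. orth_proj (b j) (b i)) (I - {j})"
    (is "nonsingular_family ?g ?J")
proof -
  let ?u = "Bq (b j) (b j)" and ?P = "mod_span b I \<inter> {z. Bq z (b j) = 0}"
  have fin: "finite I" using ns by (rule nonsingular_family_finite)
  obtain u' where u': "1 = ?u * u'" using unit by (rule dvdE)
  have span: "mod_span ?g ?J = ?P" using fin j unit by (rule mod_span_orth_proj)
  have Bq_g: "Bq z (?g i) = ?u * Bq z (b i)" if "z \<in> ?P" for z i
    using that by (simp add: Bq_orth_proj_right)
  show ?thesis
    unfolding nonsingular_family_def span
  proof (intro conjI allI ballI impI)
    show "finite ?J" using fin by simp
  next
    fix \<phi> :: "nat \<Rightarrow> 'a"
    obtain y where y: "y \<in> mod_span b I" "\<forall>i\<in>I. Bq y (b i) = (if i = j then 0 else u' * \<phi> i)"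
      using nonsingular_family_surj[OF ns, of "\<lambda>i. if i = j then 0 else u' * \<phi> i"] by blast
    then have "y \<in> ?P" using j by auto
    moreover have "Bq y (?g i) = \<phi> i" if "i \<in> ?J" for i
      using Bq_g[OF \<open>y \<in> ?P\<close>] y that u' by (simp add: mult.assoc[symmetric])
    ultimately show "\<exists>y\<in>?P. \<forall>i\<in>?J. Bq y (?g i) = \<phi> i" by blast
  next
    fix z assume z: "z \<in> ?P" and orth: "\<forall>i\<in>?J. Bq z (?g i) = 0"
    have "Bq z (b i) = 0" if "i \<in> I" for i
    proof (cases "i = j")
      case True
      with z show ?thesis by simp
    next
      case False
      with orth that have "Bq z (?g i) = 0" by simp
      then have "?u * Bq z (b i) = 0" by (simp only: Bq_g[OF z])
      with unit show ?thesis by auto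
    qed
    with z show "z = 0" using nonsingular_family_inj[OF ns] by blast
  qed
qed

lemma nonsingular_family_orth_unit:
  fixes b :: "nat \<Rightarrow> 'a::idom ^ 'n::finite"
  assumes V: "valuation_ring TYPE('a)" and ns: "nonsingular_family b I"
    and x: "x \<in> mod_span b I" and unit: "Bq x x dvd 1"
  shows "\<exists>j\<in>I. \<exists>g. nonsingular_family g (I - {j}) \<and>
    mod_span g (I - {j}) = mod_span b I \<inter> {z. Bq z x = 0}"
proof -
  obtain a where a: "x = (\<Sum>i\<in>I. a i *s b i)" using x by (auto simp: mod_span_iff)
  have "Bq x x = (\<Sum>i\<in>I. a i * Bq (b i) x)"
    using Bq_sum_left[of a b I x] a by simp
  then obtain j where j: "j \<in> I" "(a j * Bq (b j) x) dvd 1"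
    using valuation_ring_sum_unit[OF V, of "\<lambda>i. a i * Bq (b i) x" I] unit by auto
  have "a j dvd 1" using j(2) by (rule dvd_mult_left)
  let ?b' = "b(j := x)"
  have fin: "finite I" using ns by (rule nonsingular_family_finite)
  have ns': "nonsingular_family ?b' I" using nonsingular_family_exchange[OF ns j(1) a \<open>a j dvd 1\<close>] .
  have span': "mod_span ?b' I = mod_span b I" using mod_span_exchange[OF fin j(1) a \<open>a j dvd 1\<close>] .
  have "nonsingular_family (\<lambda>i. orth_proj x (?b' i)) (I - {j})"
    using nonsingular_family_orth_member[OF ns' j(1)] unit by simp
  moreover have "mod_span (\<lambda>i. orth_proj x (?b' i)) (I - {j}) = mod_span b I \<inter> {z. Bq z x = 0}"
    using mod_span_orth_proj[OF fin j(1), of ?b'] unit span' by simp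
  ultimately show ?thesis using j(1) by blast
qed

lemma nonsingular_family_Bq_factor:
  fixes b :: "nat \<Rightarrow> 'a::idom ^ 'n::finite"
  assumes V: "valuation_ring TYPE('a)" and ns: "nonsingular_family b I" and ne: "I \<noteq> {}"
  obtains y p \<beta> where "y \<in> mod_span b I" "p \<in> mod_span b I" "Bq y p = 1"
    "\<And>z. z \<in> mod_span b I \<Longrightarrow> Bq z w = \<beta> * Bq z y"
proof -
  have fin: "finite I" using ns by (rule nonsingular_family_finite)
  obtain k where k: "k \<in> I" "\<forall>i\<in>I. Bq (b k) w dvd Bq (b i) w"
    using valuation_ring_ex_min_dvd[OF V fin ne, of "\<lambda>i. Bq (b i) w"] by blast
  obtain \<gamma> where \<gamma>: "\<forall>i\<in>I. Bq (b i) w = Bq (b k) w * \<gamma> i"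
    using bchoice[OF k(2)[unfolded dvd_def]] by blast
  \<comment> \<open>Already \<open>\<gamma> k = 1\<close> unless all \<open>Bq (b i) w\<close> vanish.\<close>
  obtain y where y: "y \<in> mod_span b I" "\<forall>i\<in>I. Bq y (b i) = (\<gamma>(k := 1)) i"
    using nonsingular_family_surj[OF ns, of "\<gamma>(k := 1)"] by blast
  have "Bq (b i) w = Bq (b i) (Bq (b k) w *s y)" if "i \<in> I" for i
  proof -
    have "Bq y (b i) = (\<gamma>(k := 1)) i" using y(2) that by blast
    then have y_i: "Bq (b i) (Bq (b k) w *s y) = Bq (b k) w * (\<gamma>(k := 1)) i"
      by (simp only: Bq_smult_right Bq_commute[of "b i" y])
    show ?thesis
    proof (cases "i = k")
      case True
      with y_i show ?thesis by simp
    next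
      case False
      with y_i \<gamma>[rule_format, OF that] show ?thesis by simp
    qed
  qed
  then have w: "Bq z w = Bq z (Bq (b k) w *s y)" if "z \<in> mod_span b I" for z
    using Bq_mod_span_cong[OF that] by blast
  show thesis
  proof (rule that[of y "b k" "Bq (b k) w"])
    show "b k \<in> mod_span b I" using fin k(1) by (rule mod_span_base)
    have "Bq y (b k) = (\<gamma>(k := 1)) k" using y(2) k(1) by blast
    then show "Bq y (b k) = 1" by simp
    show "Bq z w = Bq (b k) w * Bq z y" if "z \<in> mod_span b I" for z
      using w[OF that] by (simp only: Bq_smult_right)
  qed (fact y(1))
qed

lemma valuation_ring_exists_nonsingular_plane:
  fixes y p :: "'a::idom ^ 'n::finite"
  assumes V: "valuation_ring TYPE('a)" and two: "(2::'a) dvd 1"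
    and yp: "Bq y p = 1" and yy: "\<not> Bq y y dvd 1"
  shows "\<exists>z\<in>{p, p + y}. Bq z z dvd 1 \<and> (Bq z z * Bq y y - (Bq z y)\<^sup>2) dvd 1"
proof -
  have py: "Bq p y = 1" using yp by (simp add: Bq_commute)
  have "\<not> (Bq y y * Bq p p) dvd 1" using yy by (meson dvd_mult_left)
  then have "(-1 + Bq y y * Bq p p) dvd 1" by (intro valuation_ring_unit_add_nonunit[OF V]) simp_all
  then have disc: "(Bq y y * Bq p p - 1) dvd 1" by simp
  show ?thesis
  proof (cases "Bq p p dvd 1")
    case True
    with disc py show ?thesis by (auto simp: algebra_simps)
  next
    case False
    have "\<not> (Bq p p + Bq y y) dvd 1" using valuation_ring_nonunit_add[OF V False yy] .
    then have "(2 + (Bq p p + Bq y y)) dvd 1" using valuation_ring_unit_add_nonunit[OF V two] by blast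
    moreover have "Bq (p + y) (p + y) = 2 + (Bq p p + Bq y y)" "Bq (p + y) y = 1 + Bq y y"
      using yp py by (simp_all add: Bq_add_left Bq_add_right)
    moreover have "(2 + (Bq p p + Bq y y)) * Bq y y - (1 + Bq y y)\<^sup>2 = Bq y y * Bq p p - 1"
      by (simp add: power2_eq_square algebra_simps)
    ultimately show ?thesis using disc by auto
  qed
qed

lemma nonsingular_family_orth_primitive:
  fixes b :: "nat \<Rightarrow> 'a::idom ^ 'n::finite"
  assumes V: "valuation_ring TYPE('a)" and two: "(2::'a) dvd 1" and ns: "nonsingular_family b I"
    and y: "y \<in> mod_span b I" and p: "p \<in> mod_span b I" and yp: "Bq y p = 1"
  shows "\<exists>b' I'. nonsingular_family b' I' \<and> mod_span b' I' \<subseteq> mod_span b I \<inter> {x. Bq x y = 0} \<and>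
    card I \<le> card I' + 2"
proof (cases "Bq y y dvd 1")
  case True
  then obtain j g where "j \<in> I" "nonsingular_family g (I - {j})"
      "mod_span g (I - {j}) = mod_span b I \<inter> {x. Bq x y = 0}"
    using nonsingular_family_orth_unit[OF V ns y] by blast
  then show ?thesis by (intro exI[of _ g] exI[of _ "I - {j}"]) auto
next
  case False
  have fin: "finite I" using ns by (rule nonsingular_family_finite)
  obtain z where z: "z \<in> mod_span b I" "Bq z z dvd 1" "(Bq z z * Bq y y - (Bq z y)\<^sup>2) dvd 1"
    using valuation_ring_exists_nonsingular_plane[OF V two yp False] p y
      is_submodule_mod_span[of b I] unfolding is_submodule_def by blast
  obtain j1 g1 where j1: "j1 \<in> I" "nonsingular_family g1 (I - {j1})"
      "mod_span g1 (I - {j1}) = mod_span b I \<inter> {x. Bq x z = 0}"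
    using nonsingular_family_orth_unit[OF V ns z(1,2)] by blast
  define y' where "y' = orth_proj z y"
  have "y' \<in> mod_span g1 (I - {j1})"
    using j1(3) orth_proj_mem[OF is_submodule_mod_span z(1) y] by (simp add: y'_def Bq_orth_proj_left)
  moreover have "Bq y' y' dvd 1"
    using mult_dvd_mono[OF z(2,3)] by (simp add: y'_def Bq_orth_proj_self Bq_commute[of y z])
  ultimately obtain j2 g2 where j2: "j2 \<in> I - {j1}" "nonsingular_family g2 (I - {j1} - {j2})"
      "mod_span g2 (I - {j1} - {j2}) = mod_span g1 (I - {j1}) \<inter> {x. Bq x y' = 0}"
    using nonsingular_family_orth_unit[OF V j1(2)] by blast
  have "Bq x y = 0" if "x \<in> mod_span g2 (I - {j1} - {j2})" for x
  proof -
    have "Bq x z = 0" "Bq x y' = 0" using that j1(3) j2(3) by auto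
    then have "Bq z z * Bq x y = 0" by (simp add: y'_def Bq_orth_proj_right)
    with z(2) show ?thesis by auto
  qed
  moreover have "card I \<le> card (I - {j1} - {j2}) + 2" using j1(1) j2(1) fin by simp
  ultimately show ?thesis using j1(3) j2(2,3) by (intro exI[of _ g2] exI[of _ "I - {j1} - {j2}"]) auto
qed

lemma nonsingular_family_orth:
  fixes b :: "nat \<Rightarrow> 'a::idom ^ 'n::finite"
  assumes V: "valuation_ring TYPE('a)" and two: "(2::'a) dvd 1" and ns: "nonsingular_family b I"
  shows "\<exists>b' I'. nonsingular_family b' I' \<and> mod_span b' I' \<subseteq> mod_span b I \<inter> {x. Bq x w = 0} \<and>
    card I \<le> card I' + 2"
proof (cases "I = {}")
  case True
  with ns show ?thesis by (intro exI[of _ b] exI[of _ I]) auto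
next
  case False
  obtain y p \<beta> where y: "y \<in> mod_span b I" "p \<in> mod_span b I" "Bq y p = 1"
    and w: "\<And>z. z \<in> mod_span b I \<Longrightarrow> Bq z w = \<beta> * Bq z y"
    using nonsingular_family_Bq_factor[OF V ns False] by metis
  obtain b' I' where b': "nonsingular_family b' I'" "card I \<le> card I' + 2"
    and sub: "mod_span b' I' \<subseteq> mod_span b I \<inter> {x. Bq x y = 0}"
    using nonsingular_family_orth_primitive[OF V two ns y] by blast
  have "Bq x w = 0" if "x \<in> mod_span b' I'" for x
  proof -
    have "x \<in> mod_span b I" "Bq x y = 0" using that sub by auto
    then show ?thesis using w by simp
  qed
  with b' sub show ?thesis by (intro exI[of _ b'] exI[of _ I']) auto
qed

lemma nonsingular_family_orth_vectors:
  fixes b :: "nat \<Rightarrow> 'a::idom ^ 'n::finite"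
  assumes V: "valuation_ring TYPE('a)" and two: "(2::'a) dvd 1" and ns: "nonsingular_family b I"
  shows "\<exists>b' I'. nonsingular_family b' I' \<and>
    mod_span b' I' \<subseteq> mod_span b I \<inter> {x. \<forall>i<s. Bq x (v i) = 0} \<and> card I \<le> card I' + 2 * s"
proof (induction s)
  case 0
  with ns show ?case by auto
next
  case (Suc s)
  then obtain b1 I1 where "nonsingular_family b1 I1"
      "mod_span b1 I1 \<subseteq> mod_span b I \<inter> {x. \<forall>i<s. Bq x (v i) = 0}" "card I \<le> card I1 + 2 * s"
    by blast
  moreover obtain b2 I2 where "nonsingular_family b2 I2"
      "mod_span b2 I2 \<subseteq> mod_span b1 I1 \<inter> {x. Bq x (v s) = 0}" "card I1 \<le> card I2 + 2"
    using nonsingular_family_orth[OF V two \<open>nonsingular_family b1 I1\<close>] by blast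
  ultimately show ?case
    by (intro exI[of _ b2] exI[of _ I2]) (auto simp: less_Suc_eq)
qed

lemma mod_span_axis:
  fixes h :: "nat \<Rightarrow> 'n::finite"
  assumes h: "bij_betw h I UNIV"
  shows "mod_span (\<lambda>k. axis (h k) (1::'a::comm_ring_1)) I = UNIV"
proof (intro set_eqI iffI)
  fix x :: "'a ^ 'n"
  have "x = (\<Sum>i\<in>UNIV. x$i *s axis i 1)" by (simp add: basis_expansion)
  also have "\<dots> = (\<Sum>k\<in>I. x$(h k) *s axis (h k) 1)"
    using sum.reindex_bij_betw[OF h, of "\<lambda>i. x$i *s axis i 1"] by simp
  finally have x: "x = (\<Sum>k\<in>I. x$(h k) *s axis (h k) 1)" .
  show "x \<in> mod_span (\<lambda>k. axis (h k) 1) I" by (subst x) (rule mod_span_sumI)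
qed simp

lemma nonsingular_family_axis:
  fixes h :: "nat \<Rightarrow> 'n::finite"
  assumes two: "(2::'a::idom) dvd 1" and h: "bij_betw h I UNIV"
  shows "nonsingular_family (\<lambda>k. axis (h k) (1::'a)) I"
proof -
  obtain t :: 'a where t: "1 = 2 * t" using two by (rule dvdE)
  show ?thesis
    unfolding nonsingular_family_def mod_span_axis[OF h]
  proof (intro conjI allI ballI impI)
    show "finite I" using h by (simp add: bij_betw_finite)
  next
    fix \<phi> :: "nat \<Rightarrow> 'a"
    have "Bq (\<chi> i. t * \<phi> (inv_into I h i)) (axis (h l) 1) = \<phi> l" if "l \<in> I" for l
      using that h t by (simp add: Bq_axis_right bij_betw_def mult.assoc[symmetric])
    then show "\<exists>y\<in>UNIV. \<forall>i\<in>I. Bq y (axis (h i) 1) = \<phi> i" by blast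
  next
    fix z :: "'a ^ 'n" assume "\<forall>i\<in>I. Bq z (axis (h i) 1) = 0"
    with two have "\<forall>k\<in>I. z $ h k = 0" by (auto simp: Bq_axis_right)
    with h show "z = 0" unfolding vec_eq_iff bij_betw_def by (metis UNIV_I imageE zero_index)
  qed
qed

lemma is_frame_Suc: "is_frame u (Suc r) \<Longrightarrow> is_frame u r"
  unfolding is_frame_def by auto

lemma nonsingular_family_orth_frame:
  fixes u :: "nat \<Rightarrow> 'a::idom ^ 'n::finite"
  assumes V: "valuation_ring TYPE('a)" and two: "(2::'a) dvd 1"
  shows "is_frame u r \<Longrightarrow> \<exists>b I. nonsingular_family b I \<and>
    mod_span b I = {x. \<forall>i<r. Bq x (u i) = 0} \<and> card I + r = CARD('n)"
proof (induction r)
  case 0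
  obtain h :: "nat \<Rightarrow> 'n" where h: "bij_betw h {..<CARD('n)} UNIV"
    using ex_bij_betw_nat_finite[of "UNIV :: 'n set"] by (auto simp: atLeast0LessThan)
  with nonsingular_family_axis[OF two h] mod_span_axis[OF h] show ?case
    by (intro exI[of _ "\<lambda>k. axis (h k) 1"] exI[of _ "{..<CARD('n)}"]) auto
next
  case (Suc r)
  then obtain b I where ns: "nonsingular_family b I"
      and span: "mod_span b I = {x. \<forall>i<r. Bq x (u i) = 0}" and card: "card I + r = CARD('n)"
    using is_frame_Suc by blast
  have "u r \<in> mod_span b I" "Bq (u r) (u r) dvd 1"
    using Suc.prems two unfolding span is_frame_def unit_vector_def Bq_self by auto
  then obtain j g where j: "j \<in> I" "nonsingular_family g (I - {j})"
      "mod_span g (I - {j}) = mod_span b I \<inter> {x. Bq x (u r) = 0}"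
    using nonsingular_family_orth_unit[OF V ns] by blast
  moreover have "card (I - {j}) + Suc r = CARD('n)"
  proof -
    have "0 < card I" using j(1) nonsingular_family_finite[OF ns] by (auto simp: card_gt_0_iff)
    moreover have "card (I - {j}) = card I - 1" using j(1) by (simp add: card_Diff_singleton)
    ultimately show ?thesis using card by linarith
  qed
  ultimately show ?case using span by (intro exI[of _ g] exI[of _ "I - {j}"]) (auto simp: less_Suc_eq)
qed

section \<open>Non-singular subspaces\<close>

lemma nonsingular_family_reindex:
  assumes h: "bij_betw h J I" and ns: "nonsingular_family b I" and J: "finite J"
  shows "nonsingular_family (b \<circ> h) J"
  unfolding nonsingular_family_def mod_span_reindex[OF h]
proof (intro conjI allI ballI impI)
  fix \<phi> :: "nat \<Rightarrow> 'a"
  obtain y where "y \<in> mod_span b I" "\<forall>i\<in>I. Bq y (b i) = \<phi> (inv_into J h i)"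
    using nonsingular_family_surj[OF ns, of "\<lambda>i. \<phi> (inv_into J h i)"] by blast
  moreover from this(2) h have "\<forall>i\<in>J. Bq y ((b \<circ> h) i) = \<phi> i"
    by (auto simp: bij_betw_def)
  ultimately show "\<exists>y\<in>mod_span b I. \<forall>i\<in>J. Bq y ((b \<circ> h) i) = \<phi> i" by blast
next
  fix z assume "z \<in> mod_span b I" "\<forall>i\<in>J. Bq z ((b \<circ> h) i) = 0"
  with h show "z = 0" using nonsingular_family_inj[OF ns] by (auto simp: bij_betw_def)
qed (fact J)

lemma linear_form_on_sum:
  assumes f: "linear_form_on W f" and W: "is_submodule W" and b: "\<forall>i\<in>I. b i \<in> W"
  shows "f (\<Sum>i\<in>I. c i *s b i) = (\<Sum>i\<in>I. c i * f (b i))"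
proof -
  have "f (0 *s 0) = 0 * f 0" using f W unfolding linear_form_on_def is_submodule_def by blast
  then have f0: "f 0 = 0" by simp
  from b show ?thesis
  proof (induction I rule: infinite_finite_induct)
    case (insert i F)
    then have "(\<Sum>i\<in>F. c i *s b i) \<in> W" "c i *s b i \<in> W"
      using is_submodule_sum[OF W] W by (auto simp: is_submodule_def)
    with insert f show ?case by (simp add: linear_form_on_def)
  qed (simp_all add: f0)
qed

lemma free_of_rank_mod_span:
  assumes ns: "nonsingular_family b {..<d}"
  shows "free_of_rank (mod_span b {..<d}) d"
  unfolding free_of_rank_def
proof (intro exI[of _ b] conjI allI impI)
  show "b i \<in> mod_span b {..<d}" if "i < d" for i using that by (simp add: mod_span_base)
  show "mod_span b {..<d} = lin_span b d" by (simp add: lin_span_eq_mod_span)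
next
  fix c l assume c: "(\<Sum>i<d. c i *s b i) = 0" and l: "l < d"
  obtain y where y: "\<forall>i<d. Bq y (b i) = (if i = l then 1 else 0)"
    using nonsingular_family_surj[OF ns, of "\<lambda>i. if i = l then 1 else 0"] by auto
  have "0 = Bq y (\<Sum>i<d. c i *s b i)" using c by simp
  also have "\<dots> = (\<Sum>i<d. c i * (if i = l then 1 else 0))" using y by (simp add: Bq_sum_right)
  also have "\<dots> = (\<Sum>i<d. if i = l then c i else 0)" by (rule sum.cong) simp_all
  also have "\<dots> = c l" using l by simp
  finally show "c l = 0" by simp
qed

lemma nonsingular_subspace_mod_span_lessThan:
  assumes ns: "nonsingular_family b {..<d}"
  shows "nonsingular_subspace (mod_span b {..<d}) d"
proof -
  let ?W = "mod_span b {..<d}"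
  have b: "\<forall>i\<in>{..<d}. b i \<in> ?W" by (simp add: mod_span_base)
  have "inj_on (\<lambda>x. restrict (Bq x) ?W) ?W"
  proof (rule inj_onI)
    fix x x' assume x: "x \<in> ?W" "x' \<in> ?W" and eq: "restrict (Bq x) ?W = restrict (Bq x') ?W"
    have "Bq x (b i) = Bq x' (b i)" if "i < d" for i
      using fun_cong[OF eq, of "b i"] b that by simp
    then have "\<forall>i\<in>{..<d}. Bq (x - x') (b i) = 0" by (simp add: Bq_diff_left)
    with is_submodule_diff[OF is_submodule_mod_span x] show "x = x'"
      using nonsingular_family_inj[OF ns] by fastforce
  qed
  moreover have "\<exists>x\<in>?W. \<forall>y\<in>?W. Bq x y = f y" if f: "linear_form_on ?W f" for f
  proof -
    obtain x where x: "x \<in> ?W" "\<forall>i\<in>{..<d}. Bq x (b i) = f (b i)"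
      using nonsingular_family_surj[OF ns, of "\<lambda>i. f (b i)"] by blast
    have "Bq x y = f y" if "y \<in> ?W" for y
    proof -
      obtain c where y: "y = (\<Sum>i<d. c i *s b i)" using \<open>y \<in> ?W\<close> by (auto simp: mod_span_iff)
      show ?thesis
        using x(2) linear_form_on_sum[OF f is_submodule_mod_span b] by (simp add: y Bq_sum_right)
    qed
    with x(1) show ?thesis by blast
  qed
  ultimately show ?thesis
    unfolding nonsingular_subspace_def using is_submodule_mod_span free_of_rank_mod_span[OF ns] by blast
qed

lemma nonsingular_subspace_mod_span:
  assumes ns: "nonsingular_family b I"
  shows "nonsingular_subspace (mod_span b I) (card I)"
proof -
  obtain h where h: "bij_betw h {..<card I} I"
    using ex_bij_betw_nat_finite[OF nonsingular_family_finite[OF ns]] by (auto simp: atLeast0LessThan)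
  from nonsingular_subspace_mod_span_lessThan[OF nonsingular_family_reindex[OF h ns]]
  show ?thesis by (simp add: mod_span_reindex[OF h])
qed

lemma orth_subset_perp: "{x. \<forall>i<m. Bq x (w i) = 0} \<subseteq> perp (lin_span w m)"
proof (clarsimp simp: perp_def lin_span_eq_mod_span)
  fix x s assume "\<forall>i<m. Bq x (w i) = 0" "s \<in> mod_span w {..<m}"
  then have "Bq s x = Bq s 0" by (intro Bq_mod_span_cong) (auto simp: Bq_commute)
  then show "Bq x s = 0" by (simp add: Bq_commute)
qed

theorem lemma2p9:
  fixes u v :: "nat \<Rightarrow> 'a::idom ^ 'n::finite"
    and r s :: nat
  assumes "valuation_ring TYPE('a)"
    and "(2::'a) dvd 1"
    and "is_frame u r"
    and "is_frame v s"
  shows "\<exists>W d. W \<subseteq> perp (lin_span u r) \<inter> perp (lin_span v s) \<and>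
           nonsingular_subspace W d \<and>
           int d \<ge> int CARD('n) - int r - 2 * int s"
proof -
  obtain b I where ns: "nonsingular_family b I"
      and span: "mod_span b I = {x. \<forall>i<r. Bq x (u i) = 0}" and card: "card I + r = CARD('n)"
    using nonsingular_family_orth_frame[OF assms(1-3)] by blast
  obtain b' I' where ns': "nonsingular_family b' I'"
      and span': "mod_span b' I' \<subseteq> mod_span b I \<inter> {x. \<forall>i<s. Bq x (v i) = 0}"
      and card': "card I \<le> card I' + 2 * s"
    using nonsingular_family_orth_vectors[OF assms(1,2) ns] by blast
  have "mod_span b' I' \<subseteq> perp (lin_span u r) \<inter> perp (lin_span v s)"
    using span' orth_subset_perp[of r u] orth_subset_perp[of s v] unfolding span by blast
  moreover have "int (card I') \<ge> int CARD('n) - int r - 2 * int s" using card card' by linarith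
  ultimately show ?thesis using nonsingular_subspace_mod_span[OF ns'] by blast
qed
end
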